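(* Let $a\in(0,1/2)$ and $0<\lambda\le\frac{2}{1-2a}$. There exists $C=C(a,\lambda)>0$ such that for all even $N$ (with $\check{\mathcal S}^a_N\ne\emptyset$) $$\frac{\pi^{\lambda,a}_N(\partial\check{\mathcal S}^a_N)}{\pi^{\lambda,a}_N(\check{\mathcal S}^a_N)}\ge CN^{-3}.$$
   Context: $\langle s\rangle$ is the smallest even integer $\ge s$. For $N$ even, $\mathcal S^a_N$ is the set of $\eta=(\eta_x)_{x\in\{0,\dots,N\}}$ with values in $\mathbb Z_{\ge0}$, $\eta_0=\eta_N=\langle aN\rangle$, $|\eta_{x+1}-\eta_x|=1$; $H(\eta)=\#\{x:\eta_x=0\}$; $\pi^{\lambda,a}_N(\eta)=\lambda^{H(\eta)}/\sum_{\eta'\in\mathcal S^a_N}\lambda^{H(\eta')}$. $\check{\mathcal S}^a_N=\{\eta\in\mathcal S^a_N:\exists x,\ \eta_x=0\}$, and $\partial\check{\mathcal S}^a_N$ is the set of $\eta\in\mathcal S^a_N$ with exactly one contact, i.e. $H(\eta)=1$ (equivalently, the paths of $\check{\mathcal S}^a_N$ from which the corner-flip dynamics can jump outside $\check{\mathcal S}^a_N$). *)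

theory Defs
  imports Complex_Main
begin

definition even_ceil :: "real \<Rightarrow> int" where
  "even_ceil s = (LEAST k::int. even k \<and> s \<le> real_of_int k)"

definition paths :: "real \<Rightarrow> nat \<Rightarrow> int list set" where
  "paths a N = {\<eta>. length \<eta> = N + 1
      \<and> (\<forall>x\<le>N. \<eta> ! x \<ge> 0)
      \<and> \<eta> ! 0 = even_ceil (a * real N) \<and> \<eta> ! N = even_ceil (a * real N)
      \<and> (\<forall>x<N. \<bar>\<eta> ! (x + 1) - \<eta> ! x\<bar> = 1)}"

definition contacts :: "nat \<Rightarrow> int list \<Rightarrow> nat" where
  "contacts N \<eta> = card {x. x \<le> N \<and> \<eta> ! x = 0}"

definition pin :: "real \<Rightarrow> real \<Rightarrow> nat \<Rightarrow> int list set \<Rightarrow> real" where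
  "pin lam a N A = (\<Sum>\<eta>\<in>A \<inter> paths a N. lam ^ contacts N \<eta>) / (\<Sum>\<eta>\<in>paths a N. lam ^ contacts N \<eta>)"

definition check_paths :: "real \<Rightarrow> nat \<Rightarrow> int list set" where
  "check_paths a N = {\<eta> \<in> paths a N. \<exists>x\<le>N. \<eta> ! x = 0}"

definition bd_check_paths :: "real \<Rightarrow> nat \<Rightarrow> int list set" where
  "bd_check_paths a N = {\<eta> \<in> paths a N. contacts N \<eta> = 1}"

end

theory Submission
  imports Defs
begin

text \<open>Encode a path by its \<open>\<plusminus>1\<close> steps from \<open>h = \<langle>aN\<rangle>\<close>: the paths with a contact are the
  nonnegative bridges from \<open>h\<close> that touch \<open>0\<close>, the boundary paths those touching \<open>0\<close> exactly once.

  Lower bound: cut a walk from \<open>h\<close> to \<open>-h\<close> at its first visit to \<open>0\<close>, rotate the rest by the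
  cycle lemma and reflect it. This maps the \<open>N choose (N/2 - h)\<close> such walks at most \<open>N\<close>-to-one onto
  single-contact bridges.

  Upper bound: a touching bridge splits at its first and last zero into a first passage, an excursion
  from \<open>0\<close> carrying all contacts, and a last exit; reflecting the last exit turns the outer pieces
  into a walk from \<open>h\<close> to \<open>-h\<close>. A Lyapunov function bounds the \<open>\<lambda>\<close>-weight of the excursions of
  length \<open>m\<close> by \<open>\<lambda> \<mu>\<^sup>m\<close>, where \<open>\<mu> = 2\<close> for \<open>\<lambda> \<le> 2\<close> and \<open>\<mu> = \<lambda> / sqrt (\<lambda> - 1)\<close> otherwise.
  The hypothesis \<open>\<lambda> \<le> 2 / (1 - 2a)\<close> is exactly \<open>\<mu> \<le> 2 / sqrt (1 - 4a\<^sup>2)\<close>, the exponential growth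
  rate of \<open>n choose (n/2 - an)\<close>, so the excursion weight is absorbed by the binomial coefficient
  up to a factor \<open>N + 1\<close>. Altogether the ratio is at least \<open>1 / (N (N + 1)\<^sup>2)\<close>.\<close>

section \<open>Walks as step sequences\<close>

fun heights :: "int \<Rightarrow> bool list \<Rightarrow> int list" where
  "heights y [] = [y]"
| "heights y (b # bs) = y # heights (if b then y + 1 else y - 1) bs"

definition displacement :: "bool list \<Rightarrow> int" where
  "displacement bs = (\<Sum>b\<leftarrow>bs. if b then 1 else -1)"

lemma displacement_Nil [simp]: "displacement [] = 0"
  by (simp add: displacement_def)

lemma displacement_Cons [simp]: "displacement (b # bs) = (if b then 1 else -1) + displacement bs"
  by (simp add: displacement_def)

lemma displacement_append [simp]: "displacement (xs @ ys) = displacement xs + displacement ys"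
  by (simp add: displacement_def)

lemma displacement_map_Not [simp]: "displacement (map Not bs) = - displacement bs"
  by (induction bs) auto

lemma displacement_rev [simp]: "displacement (rev bs) = displacement bs"
  by (induction bs) auto

lemma displacement_take_Suc:
  "i < length bs \<Longrightarrow> displacement (take (Suc i) bs) = displacement (take i bs) + (if bs ! i then 1 else -1)"
  by (simp add: take_Suc_conv_app_nth)

lemma abs_displacement_le: "\<bar>displacement bs\<bar> \<le> int (length bs)"
  by (induction bs) auto

lemma displacement_eq_count_list: "displacement bs = 2 * int (count_list bs True) - int (length bs)"
  by (induction bs) auto

lemma length_heights [simp]: "length (heights y bs) = Suc (length bs)"
  by (induction bs arbitrary: y) auto

lemma heights_eq_Cons: "heights y bs = y # tl (heights y bs)"
  by (cases bs) auto

lemma heights_not_Nil [simp]: "heights y bs \<noteq> []"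
  by (cases bs) auto

lemma hd_heights [simp]: "hd (heights y bs) = y"
  by (cases bs) auto

lemma start_in_heights: "y \<in> set (heights y bs)"
  by (cases bs) auto

lemma last_heights [simp]: "last (heights y bs) = y + displacement bs"
  by (induction bs arbitrary: y) (auto simp: heights_eq_Cons[symmetric])

lemma nth_heights: "j \<le> length bs \<Longrightarrow> heights y bs ! j = y + displacement (take j bs)"
proof (induction bs arbitrary: y j)
  case (Cons b bs)
  then show ?case by (cases j) auto
qed simp

lemma heights_append: "heights y (xs @ ys) = butlast (heights y xs) @ heights (y + displacement xs) ys"
  by (induction xs arbitrary: y) (simp_all add: algebra_simps)

lemma heights_take: "heights y (take k bs) = take (Suc k) (heights y bs)"
proof (induction bs arbitrary: y k)
  case (Cons b bs)
  then show ?case by (cases k) auto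
qed simp

lemma heights_drop:
  assumes "k \<le> length bs"
  shows "heights (y + displacement (take k bs)) (drop k bs) = drop k (heights y bs)"
proof -
  have "heights y bs = butlast (heights y (take k bs)) @ heights (y + displacement (take k bs)) (drop k bs)"
    using heights_append[of y "take k bs" "drop k bs"] by simp
  moreover have "length (butlast (heights y (take k bs))) = k"
    using assms by simp
  ultimately show ?thesis
    by (metis append_eq_conv_conj)
qed

lemma heights_rev_map_Not: "heights (y + displacement bs) (rev (map Not bs)) = rev (heights y bs)"
proof (induction bs arbitrary: y)
  case (Cons b bs)
  let ?y = "if b then y + 1 else y - 1"
  have "heights (y + displacement (b # bs)) (rev (map Not (b # bs)))
      = butlast (heights (?y + displacement bs) (rev (map Not bs))) @ [?y, y]"
    by (simp add: heights_append algebra_simps)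
  also have "\<dots> = rev (heights ?y bs) @ [y]"
  proof -
    have "last (rev (heights ?y bs)) = ?y"
      by (subst heights_eq_Cons) simp
    then have "butlast (rev (heights ?y bs)) @ [?y] = rev (heights ?y bs)"
      using append_butlast_last_id[of "rev (heights ?y bs)"] by simp
    then show ?thesis
      using Cons.IH[of ?y] by (metis append.assoc append_Cons append_Nil)
  qed
  finally show ?case by simp
qed simp

lemma heights_step: "i < length bs \<Longrightarrow> \<bar>heights y bs ! Suc i - heights y bs ! i\<bar> = 1"
  by (simp add: nth_heights displacement_take_Suc)

lemma heights_inj: "length bs = length bs' \<Longrightarrow> heights y bs = heights y bs' \<Longrightarrow> bs = bs'"
proof (induction bs arbitrary: bs' y)
  case (Cons b bs)
  then obtain b' bs'' where bs': "bs' = b' # bs''"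
    by (cases bs') auto
  have "heights (if b then y + 1 else y - 1) bs = heights (if b' then y + 1 else y - 1) bs''"
    using Cons.prems bs' by simp
  moreover from arg_cong[OF this, of hd] have "b = b'"
    by (auto split: if_splits)
  ultimately show ?case
    using Cons bs' by simp
qed simp

lemma card_lists_count_True: "card {bs. length bs = n \<and> count_list bs True = k} = n choose k"
proof (induction n arbitrary: k)
  case 0
  have "{bs::bool list. length bs = 0 \<and> count_list bs True = k} = (if k = 0 then {[]} else {})"
    by auto
  then show ?case by simp
next
  case (Suc n)
  show ?case
  proof (cases k)
    case 0
    have "{bs. length bs = Suc n \<and> count_list bs True = 0} = {replicate (Suc n) False}"
    proof safe
      fix bs :: "bool list"
      assume "length bs = Suc n" "count_list bs True = 0"
      then show "bs = replicate (Suc n) False"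
        by (metis (full_types) count_list_0_iff replicate_length_same)
    qed (simp_all add: count_list_0_iff)
    then show ?thesis using 0 by simp
  next
    case (Suc j)
    let ?A = "\<lambda>k. {bs. length bs = n \<and> count_list bs True = k}"
    have split: "{bs. length bs = Suc n \<and> count_list bs True = Suc j} =
        Cons True ` ?A j \<union> Cons False ` ?A (Suc j)"
    proof safe
      fix bs :: "bool list"
      assume bs: "length bs = Suc n" "count_list bs True = Suc j" "bs \<notin> Cons False ` ?A (Suc j)"
      then obtain b cs where "bs = b # cs"
        by (cases bs) auto
      with bs show "bs \<in> Cons True ` ?A j"
        by (cases b) auto
    qed auto
    have finite: "finite (?A k)" for k
      by (rule finite_subset[OF _ finite_lists_length_eq[of "UNIV::bool set" n]]) auto
    have "card (Cons True ` ?A j \<union> Cons False ` ?A (Suc j)) = card (?A j) + card (?A (Suc j))"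
      by (subst card_Un_disjoint) (auto simp: finite card_image)
    then show ?thesis
      using Suc Suc.IH split by simp
  qed
qed

definition walks_with_displacement :: "nat \<Rightarrow> int \<Rightarrow> bool list set" where
  "walks_with_displacement n d = {bs. length bs = n \<and> displacement bs = d}"

lemma finite_walks_with_displacement: "finite (walks_with_displacement n d)"
  by (rule finite_subset[OF _ finite_lists_length_eq[of "UNIV::bool set" n]])
    (auto simp: walks_with_displacement_def)

lemma walks_with_displacement_nonempty:
  assumes "bs \<in> walks_with_displacement n (-2 * h)" "0 \<le> h"
  shows "even n \<and> 2 * h \<le> int n"
proof -
  have count: "int n = 2 * (int (count_list bs True) + h)"
    using assms displacement_eq_count_list[of bs] by (simp add: walks_with_displacement_def)
  then have "even (int n)"
    by (metis dvd_triv_left)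
  then have "even n"
    by simp
  then show ?thesis
    using count assms(2) by simp
qed

lemma card_walks_with_displacement:
  assumes "0 \<le> h" "even n" "2 * h \<le> int n"
  shows "card (walks_with_displacement n (-2 * h)) = n choose (n div 2 - nat h)"
proof -
  obtain q where q: "n = 2 * q"
    using assms(2) by (auto elim: evenE)
  have "displacement bs = -2 * h \<longleftrightarrow> count_list bs True = n div 2 - nat h" if "length bs = n" for bs
  proof -
    have "displacement bs = 2 * int (count_list bs True) - 2 * int q"
      using displacement_eq_count_list[of bs] that q by simp
    moreover have "int (n div 2 - nat h) = int q - h"
      using assms q by simp
    ultimately have "displacement bs = -2 * h \<longleftrightarrow> int (count_list bs True) = int (n div 2 - nat h)"
      by linarith
    then show ?thesis
      by (simp only: of_nat_eq_iff)
  qed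
  then have "walks_with_displacement n (-2 * h) = {bs. length bs = n \<and> count_list bs True = n div 2 - nat h}"
    by (auto simp: walks_with_displacement_def)
  then show ?thesis
    by (simp add: card_lists_count_True)
qed

section \<open>Growth of the binomial coefficients\<close>

lemma binomial_Suc_Suc_ratio:
  assumes "k \<le> n"
  shows "real (Suc (Suc n) choose Suc k) * ((real k + 1) * (real n + 1 - real k))
       = real (n choose k) * (real n + 1) * (real n + 2)"
proof -
  have a: "Suc (Suc n) * (Suc n choose k) = (Suc (Suc n) choose Suc k) * Suc k"
    by (rule Suc_times_binomial_eq)
  have b: "(Suc n - k) * (Suc n choose k) = Suc n * (n choose k)"
    using binomial_absorb_comp[of "Suc n" k] by simp
  have "(Suc (Suc n) choose Suc k) * Suc k * (Suc n - k) = (n choose k) * Suc n * Suc (Suc n)"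
    by (metis a b mult.assoc mult.commute)
  then have "real ((Suc (Suc n) choose Suc k) * Suc k * (Suc n - k)) = real ((n choose k) * Suc n * Suc (Suc n))"
    by (simp only:)
  moreover have "real (Suc n - k) = real n + 1 - real k"
    using assms by (simp add: of_nat_diff)
  ultimately show ?thesis
    by (simp only: of_nat_mult of_nat_Suc) (simp add: algebra_simps)
qed

lemma binomial_Suc_Suc_ge:
  fixes \<mu> :: real
  assumes "k \<le> n" "\<mu>^2 * ((real k + 1) * (real n + 1 - real k)) \<le> (real n + 2) * (real n + 3)"
  shows "real (n choose k) * (real n + 1) * \<mu>^2 \<le> real (Suc (Suc n) choose Suc k) * (real n + 3)"
proof -
  define C0 C2 D where "C0 = real (n choose k)" and "C2 = real (Suc (Suc n) choose Suc k)"
    and "D = (real k + 1) * (real n + 1 - real k)"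
  have "0 < C0" "0 < D"
    using assms(1) by (simp_all add: C0_def D_def)
  have ratio: "C2 * D = C0 * (real n + 1) * (real n + 2)"
    using binomial_Suc_Suc_ratio[OF assms(1)] by (simp add: C0_def C2_def D_def)
  have "(C0 * (real n + 1) * \<mu>^2) * D \<le> C0 * (real n + 1) * ((real n + 2) * (real n + 3))"
    using assms(2) \<open>0 < C0\<close> by (simp add: D_def mult.assoc mult_left_mono)
  also have "\<dots> = (C0 * (real n + 1) * (real n + 2)) * (real n + 3)"
    by (simp only: mult.assoc)
  also have "\<dots> = (C2 * (real n + 3)) * D"
    unfolding ratio[symmetric] by (simp only: ac_simps)
  finally show ?thesis
    using \<open>0 < D\<close> by (simp add: C0_def C2_def)
qed

text \<open>The growth condition \<open>\<mu>\<^sup>2 (n\<^sup>2 - 4 h\<^sup>2) \<le> 4 n\<^sup>2\<close> says that \<open>\<mu>\<close> is at most the exponential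
  growth rate \<open>2 / sqrt (1 - 4 (h/n)\<^sup>2)\<close> of \<open>n choose (n/2 - h)\<close>.\<close>

definition scaled_binom :: "real \<Rightarrow> nat \<Rightarrow> nat \<Rightarrow> real" where
  "scaled_binom \<mu> h n = real (n choose (n div 2 - h)) * real (n + 1) / \<mu> ^ n"

lemma scaled_binom_step:
  fixes \<mu> :: real
  assumes "0 < \<mu>" "even n" "2 * h \<le> n"
    and growth: "\<mu>^2 * (real (n + 2)^2 - 4 * real h^2) \<le> 4 * real (n + 2)^2"
  shows "scaled_binom \<mu> h n \<le> scaled_binom \<mu> h (n + 2)"
proof -
  define k where "k = n div 2 - h"
  define D where "D = (real k + 1) * (real n + 1 - real k)"
  have "real n = 2 * real k + 2 * real h"
    using assms by (auto simp: k_def of_nat_diff elim!: evenE)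
  then have "4 * D = real (n + 2)^2 - 4 * real h^2"
    unfolding D_def by (simp add: power2_eq_square algebra_simps)
  then have "\<mu>^2 * (4 * D) \<le> 4 * real (n + 2)^2"
    using growth by simp
  then have "\<mu>^2 * D \<le> real (n + 2)^2"
    by simp
  also have "\<dots> \<le> (real n + 2) * (real n + 3)"
    by (simp add: power2_eq_square algebra_simps)
  finally have "real (n choose k) * (real n + 1) * \<mu>^2 \<le> real (Suc (Suc n) choose Suc k) * (real n + 3)"
    by (intro binomial_Suc_Suc_ge) (simp_all add: k_def D_def)
  then have "real (n choose k) * (real n + 1) * \<mu>^2 / \<mu> ^ (n + 2)
      \<le> real (Suc (Suc n) choose Suc k) * (real n + 3) / \<mu> ^ (n + 2)"
    using assms(1) by (intro divide_right_mono) auto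
  moreover have "real (n choose k) * (real n + 1) * \<mu>^2 / \<mu> ^ (n + 2) = real (n choose k) * (real n + 1) / \<mu> ^ n"
    using assms(1) by (simp add: power_add power2_eq_square)
  moreover have "(n + 2) div 2 - h = Suc k"
    using assms by (simp add: k_def)
  ultimately show ?thesis
    by (simp add: scaled_binom_def k_def add.commute)
qed

lemma growth_condition_mono:
  fixes \<mu> :: real
  assumes "4 \<le> \<mu>^2" "n \<le> N" "\<mu>^2 * (real N^2 - 4 * real h^2) \<le> 4 * real N^2"
  shows "\<mu>^2 * (real n^2 - 4 * real h^2) \<le> 4 * real n^2"
proof -
  have "(\<mu>^2 - 4) * real n^2 \<le> (\<mu>^2 - 4) * real N^2"
    using assms by (intro mult_left_mono power_mono) auto
  then show ?thesis
    using assms(3) by (simp add: algebra_simps)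
qed

lemma scaled_binom_mono:
  fixes \<mu> :: real
  assumes "0 < \<mu>" "4 \<le> \<mu>^2" "\<mu>^2 * (real N^2 - 4 * real h^2) \<le> 4 * real N^2"
    and "even n" "2 * h \<le> n"
  shows "n + 2 * d \<le> N \<Longrightarrow> scaled_binom \<mu> h n \<le> scaled_binom \<mu> h (n + 2 * d)"
proof (induction d)
  case (Suc d)
  have "scaled_binom \<mu> h n \<le> scaled_binom \<mu> h (n + 2 * d)"
    using Suc by simp
  also have "\<dots> \<le> scaled_binom \<mu> h (n + 2 * d + 2)"
  proof (rule scaled_binom_step)
    show "\<mu>^2 * (real (n + 2 * d + 2)^2 - 4 * real h^2) \<le> 4 * real (n + 2 * d + 2)^2"
      using Suc.prems by (intro growth_condition_mono[OF assms(2) _ assms(3)]) simp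
  qed (use assms in auto)
  finally show ?case
    by (simp add: add.assoc)
qed simp

lemma binomial_times_power_le:
  fixes \<mu> :: real
  assumes "0 < \<mu>" "4 \<le> \<mu>^2" "\<mu>^2 * (real N^2 - 4 * real h^2) \<le> 4 * real N^2"
    and "even n" "2 * h \<le> n" "n \<le> N" "even N"
  shows "real (n choose (n div 2 - h)) * \<mu> ^ (N - n) \<le> real (N + 1) * real (N choose (N div 2 - h))"
proof -
  define x where "x = real (n choose (n div 2 - h)) * real (n + 1)"
  define y where "y = real (N + 1) * real (N choose (N div 2 - h))"
  have "N = n + 2 * ((N - n) div 2)"
    using assms by auto
  then have "x / \<mu> ^ n \<le> y / \<mu> ^ N"
    using scaled_binom_mono[OF assms(1-5), of "(N - n) div 2"]
    by (simp add: scaled_binom_def x_def y_def mult.commute)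
  then have "x / \<mu> ^ n * \<mu> ^ N \<le> y / \<mu> ^ N * \<mu> ^ N"
    using assms(1) by (intro mult_right_mono) auto
  then have "x / \<mu> ^ n * \<mu> ^ N \<le> y"
    using assms(1) by simp
  moreover have "x / \<mu> ^ n * \<mu> ^ N = x * \<mu> ^ (N - n)"
  proof -
    have "\<mu> ^ N = \<mu> ^ n * \<mu> ^ (N - n)"
      using assms(6) by (simp flip: power_add)
    then show ?thesis
      using assms(1) by simp
  qed
  moreover have "real (n choose (n div 2 - h)) * \<mu> ^ (N - n) \<le> x * \<mu> ^ (N - n)"
    using assms(1) unfolding x_def by (intro mult_right_mono) (auto simp: mult_le_cancel_left1)
  ultimately show ?thesis
    unfolding y_def by linarith
qed

section \<open>Weighted excursions\<close>

definition nonneg_walks :: "nat \<Rightarrow> int \<Rightarrow> bool list set" where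
  "nonneg_walks n y = {w. length w = n \<and> (\<forall>v\<in>set (heights y w). 0 \<le> v)}"

definition nonneg_bridges :: "int \<Rightarrow> nat \<Rightarrow> bool list set" where
  "nonneg_bridges h n = {bs. length bs = n \<and> displacement bs = 0 \<and> (\<forall>v\<in>set (heights h bs). 0 \<le> v)}"

lemma finite_nonneg_walks: "finite (nonneg_walks n y)"
  by (rule finite_subset[OF _ finite_lists_length_eq[of "UNIV::bool set" n]]) (auto simp: nonneg_walks_def)

lemma finite_nonneg_bridges: "finite (nonneg_bridges h n)"
  by (rule finite_subset[OF _ finite_lists_length_eq[of "UNIV::bool set" n]]) (auto simp: nonneg_bridges_def)

lemma nonneg_walks_Suc:
  assumes "0 \<le> y"
  shows "nonneg_walks (Suc n) y =
    Cons True ` nonneg_walks n (y + 1) \<union> Cons False ` (if 1 \<le> y then nonneg_walks n (y - 1) else {})"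
proof (rule set_eqI)
  fix w
  show "w \<in> nonneg_walks (Suc n) y \<longleftrightarrow>
      w \<in> Cons True ` nonneg_walks n (y + 1) \<union> Cons False ` (if 1 \<le> y then nonneg_walks n (y - 1) else {})"
  proof (cases w)
    case (Cons b u)
    have "(\<forall>v\<in>set (heights (y - 1) u). 0 \<le> v) \<Longrightarrow> 1 \<le> y"
      using start_in_heights[of "y - 1" u] by fastforce
    with Cons assms show ?thesis
      by (cases b) (auto simp: nonneg_walks_def)
  qed (auto simp: nonneg_walks_def)
qed

text \<open>\<open>g\<close> is a supersolution with eigenvalue \<open>\<mu>\<close> for the walk on the nonnegative integers that
  is killed below \<open>0\<close> and picks up a factor \<open>lam\<close> at each visit to \<open>0\<close>.\<close>

definition lyapunov :: "real \<Rightarrow> real \<Rightarrow> (int \<Rightarrow> real) \<Rightarrow> bool" where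
  "lyapunov lam \<mu> g \<longleftrightarrow> 0 < g 0 \<and> (\<forall>y\<ge>0. 0 \<le> g y \<and>
     g (y + 1) + (if 1 \<le> y then (if y = 1 then lam else 1) * g (y - 1) else 0) \<le> \<mu> * g y)"

lemma lyapunov_rate_nonneg:
  assumes "lyapunov lam \<mu> g"
  shows "0 \<le> \<mu>"
proof -
  have "0 \<le> g 1" "g 1 \<le> \<mu> * g 0" "0 < g 0"
    using assms by (auto simp: lyapunov_def dest: spec[of _ 0] spec[of _ 1])
  then have "0 \<le> \<mu> * g 0"
    by linarith
  then show ?thesis
    using \<open>0 < g 0\<close> by (simp add: zero_le_mult_iff)
qed

definition walk_weight :: "real \<Rightarrow> (int \<Rightarrow> real) \<Rightarrow> int \<Rightarrow> bool list \<Rightarrow> real" where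
  "walk_weight lam g y w = lam ^ count_list (tl (heights y w)) 0 * g (y + displacement w)"

lemma walk_weight_Cons:
  assumes "y' = (if b then y + 1 else y - 1)"
  shows "walk_weight lam g y (b # w) = (if y' = 0 then lam else 1) * walk_weight lam g y' w"
proof -
  have count: "count_list (heights y' w) 0 = (if y' = 0 then 1 else 0) + count_list (tl (heights y' w)) 0"
    by (subst heights_eq_Cons) simp
  have "tl (heights y (b # w)) = heights y' w" "y + displacement (b # w) = y' + displacement w"
    using assms by auto
  then have "walk_weight lam g y (b # w) = lam ^ count_list (heights y' w) 0 * g (y' + displacement w)"
    by (simp only: walk_weight_def)
  then show ?thesis
    unfolding count by (simp add: walk_weight_def power_add)
qed

lemma sum_walk_weight_nonneg_walks_Suc:
  assumes "0 \<le> y"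
  shows "(\<Sum>w\<in>nonneg_walks (Suc n) y. walk_weight lam g y w)
    = (\<Sum>w\<in>nonneg_walks n (y + 1). walk_weight lam g (y + 1) w)
      + (if 1 \<le> y then (if y = 1 then lam else 1) * (\<Sum>w\<in>nonneg_walks n (y - 1). walk_weight lam g (y - 1) w)
         else 0)"
proof -
  have "(\<Sum>w\<in>nonneg_walks (Suc n) y. walk_weight lam g y w)
      = (\<Sum>w\<in>nonneg_walks n (y + 1). walk_weight lam g y (True # w))
        + (\<Sum>w\<in>(if 1 \<le> y then nonneg_walks n (y - 1) else {}). walk_weight lam g y (False # w))"
    unfolding nonneg_walks_Suc[OF assms]
    by (subst sum.union_disjoint) (auto simp: finite_nonneg_walks sum.reindex)
  moreover have "walk_weight lam g y (True # w) = walk_weight lam g (y + 1) w" for w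
    using walk_weight_Cons[of "y + 1" True y] assms by simp
  moreover have "walk_weight lam g y (False # w) = (if y = 1 then lam else 1) * walk_weight lam g (y - 1) w" for w
    using walk_weight_Cons[of "y - 1" False y] by simp
  ultimately show ?thesis
    by (simp add: sum_distrib_left)
qed

lemma weighted_nonneg_walks_le:
  assumes g: "lyapunov lam \<mu> g" and "0 \<le> lam" "0 \<le> y"
  shows "(\<Sum>w\<in>nonneg_walks n y. walk_weight lam g y w) \<le> \<mu> ^ n * g y"
  using \<open>0 \<le> y\<close>
proof (induction n arbitrary: y)
  case 0
  have "nonneg_walks 0 y = {[]}"
    using 0 by (auto simp: nonneg_walks_def)
  then show ?case
    by (simp add: walk_weight_def)
next
  case (Suc n)
  have \<mu>: "0 \<le> \<mu>" and step: "g (y + 1) + (if 1 \<le> y then (if y = 1 then lam else 1) * g (y - 1) else 0) \<le> \<mu> * g y"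
    using lyapunov_rate_nonneg[OF g] g Suc.prems by (auto simp: lyapunov_def)
  have "(\<Sum>w\<in>nonneg_walks (Suc n) y. walk_weight lam g y w)
      \<le> \<mu> ^ n * g (y + 1) + (if 1 \<le> y then (if y = 1 then lam else 1) * (\<mu> ^ n * g (y - 1)) else 0)"
    unfolding sum_walk_weight_nonneg_walks_Suc[OF Suc.prems]
    using Suc.IH[of "y + 1"] Suc.IH[of "y - 1"] Suc.prems \<open>0 \<le> lam\<close>
    by (intro add_mono) (auto intro: mult_left_mono)
  also have "\<dots> = \<mu> ^ n * (g (y + 1) + (if 1 \<le> y then (if y = 1 then lam else 1) * g (y - 1) else 0))"
    by (simp add: algebra_simps)
  also have "\<dots> \<le> \<mu> ^ n * (\<mu> * g y)"
    using step \<mu> by (intro mult_left_mono) auto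
  finally show ?case
    by (simp add: algebra_simps)
qed

lemma excursion_weight_le:
  assumes g: "lyapunov lam \<mu> g" and "0 < lam"
  shows "(\<Sum>w\<in>nonneg_bridges 0 m. lam ^ count_list (heights 0 w) 0) \<le> lam * \<mu> ^ m"
proof -
  have "0 < g 0" and g_nonneg: "\<And>y. 0 \<le> y \<Longrightarrow> 0 \<le> g y"
    using g by (auto simp: lyapunov_def)
  have weight: "lam ^ count_list (heights 0 w) 0 * g 0 = lam * walk_weight lam g 0 w" if "w \<in> nonneg_bridges 0 m" for w
  proof -
    have "count_list (heights 0 w) 0 = 1 + count_list (tl (heights 0 w)) 0"
      by (subst heights_eq_Cons) simp
    moreover have "displacement w = 0"
      using that by (simp add: nonneg_bridges_def)
    ultimately show ?thesis
      by (simp add: walk_weight_def power_add)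
  qed
  have "(\<Sum>w\<in>nonneg_bridges 0 m. lam ^ count_list (heights 0 w) 0) * g 0
      = lam * (\<Sum>w\<in>nonneg_bridges 0 m. walk_weight lam g 0 w)"
    by (simp add: sum_distrib_left sum_distrib_right weight)
  also have "(\<Sum>w\<in>nonneg_bridges 0 m. walk_weight lam g 0 w) \<le> (\<Sum>w\<in>nonneg_walks m 0. walk_weight lam g 0 w)"
  proof (rule sum_mono2[OF finite_nonneg_walks])
    show "nonneg_bridges 0 m \<subseteq> nonneg_walks m 0"
      by (auto simp: nonneg_bridges_def nonneg_walks_def)
    fix w
    assume "w \<in> nonneg_walks m 0 - nonneg_bridges 0 m"
    then have "0 \<le> displacement w"
      using last_in_set[OF heights_not_Nil[of 0 w]] by (auto simp: nonneg_walks_def)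
    then show "0 \<le> walk_weight lam g 0 w"
      using \<open>0 < lam\<close> g_nonneg by (simp add: walk_weight_def)
  qed
  also have "\<dots> \<le> \<mu> ^ m * g 0"
    using weighted_nonneg_walks_le[OF g less_imp_le[OF \<open>0 < lam\<close>] order_refl] .
  finally have "(\<Sum>w\<in>nonneg_bridges 0 m. lam ^ count_list (heights 0 w) 0) * g 0 \<le> (lam * \<mu> ^ m) * g 0"
    using \<open>0 < lam\<close> by (simp add: algebra_simps mult_left_mono)
  then show ?thesis
    using \<open>0 < g 0\<close> by simp
qed

lemma lyapunov_constant:
  assumes "0 < lam" "lam \<le> 2"
  shows "lyapunov lam 2 (\<lambda>y. if y = 0 then 1 / lam else 1)"
  using assms by (auto simp: lyapunov_def field_simps)

text \<open>For \<open>lam \<ge> 2\<close> the rate \<open>lam / sqrt (lam - 1)\<close> is the growth rate of the partition function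
  of the pinned walk, with eigenfunction decaying like \<open>(lam - 1) powr (- y / 2)\<close>.\<close>

lemma lyapunov_geometric:
  assumes "2 \<le> lam"
  defines "r \<equiv> 1 / sqrt (lam - 1)"
  shows "lyapunov lam (lam * r) (\<lambda>y. if y = 0 then 1 / lam else r ^ nat y)"
  unfolding lyapunov_def
proof (intro conjI allI impI)
  have "0 < r" and r2: "r^2 * (lam - 1) = 1"
    using assms by (simp_all add: r_def power_divide)
  show "0 < (if (0::int) = 0 then 1 / lam else r ^ nat 0)"
    using assms by simp
  fix y :: int
  assume "0 \<le> y"
  show "0 \<le> (if y = 0 then 1 / lam else r ^ nat y)"
    using assms \<open>0 < r\<close> by simp
  show "(if y + 1 = 0 then 1 / lam else r ^ nat (y + 1))
      + (if 1 \<le> y then (if y = 1 then lam else 1) * (if y - 1 = 0 then 1 / lam else r ^ nat (y - 1)) else 0)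
      \<le> lam * r * (if y = 0 then 1 / lam else r ^ nat y)"
  proof (cases "y = 0")
    case False
    define k where "k = nat (y - 1)"
    have y: "y = int k + 1"
      using \<open>0 \<le> y\<close> False by (simp add: k_def)
    have "r ^ (k + 2) + r ^ k = r ^ k * (r^2 + 1)"
      by (simp add: power_add power2_eq_square algebra_simps)
    also have "r^2 + 1 = lam * r^2"
      using r2 by (simp add: algebra_simps)
    finally have "r ^ (k + 2) + r ^ k = lam * r * r ^ (k + 1)"
      by (simp add: power_add power2_eq_square algebra_simps)
    then show ?thesis
      using y assms by (cases "k = 0") (simp_all add: nat_add_distrib power2_eq_square add.commute)
  qed (use assms in simp)
qed

lemma pinning_rate_le:
  fixes a lam :: real
  assumes "0 < a" "a < 1/2" "2 \<le> lam" "lam \<le> 2 / (1 - 2 * a)"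
  shows "lam^2 * (1 - 4 * a^2) \<le> 4 * (lam - 1)"
proof -
  define t where "t = lam * (1 - 2 * a)"
  have "t \<le> 2"
    using assms by (simp add: t_def field_simps)
  have "lam^2 * (1 - 4 * a^2) = 2 * lam * t - t^2"
    by (simp add: t_def power2_eq_square algebra_simps)
  moreover have "(t - 2) * (2 * lam - t - 2) \<le> 0"
    using \<open>t \<le> 2\<close> assms by (intro mult_nonpos_nonneg) (auto simp: t_def)
  ultimately show ?thesis
    by (simp add: algebra_simps power2_eq_square)
qed

lemma lyapunov_exists:
  fixes a lam :: real
  assumes a: "0 < a" "a < 1/2" and lam: "0 < lam" "lam \<le> 2 / (1 - 2 * a)"
  shows "\<exists>\<mu> g. lyapunov lam \<mu> g \<and> 0 < \<mu> \<and> 4 \<le> \<mu>^2 \<and> \<mu>^2 * (1 - 4 * a^2) \<le> 4"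
proof (cases "2 \<le> lam")
  case True
  define \<mu> where "\<mu> = lam * (1 / sqrt (lam - 1))"
  have sq: "\<mu>^2 * (lam - 1) = lam^2"
    using True by (simp add: \<mu>_def power_mult_distrib power_divide)
  have "0 \<le> (lam - 2)^2"
    by simp
  then have "4 * (lam - 1) \<le> \<mu>^2 * (lam - 1)"
    unfolding sq by (simp add: power2_eq_square algebra_simps)
  then have "4 \<le> \<mu>^2"
    using True mult_le_cancel_right_pos[of "lam - 1" 4 "\<mu>^2"] by simp
  moreover have "(\<mu>^2 * (1 - 4 * a^2)) * (lam - 1) \<le> 4 * (lam - 1)"
  proof -
    have "(\<mu>^2 * (1 - 4 * a^2)) * (lam - 1) = lam^2 * (1 - 4 * a^2)"
      using sq by (metis mult.assoc mult.commute)
    also have "\<dots> \<le> 4 * (lam - 1)"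
      by (rule pinning_rate_le[OF a True lam(2)])
    finally show ?thesis .
  qed
  then have "\<mu>^2 * (1 - 4 * a^2) \<le> 4"
    using True mult_le_cancel_right_pos[of "lam - 1" "\<mu>^2 * (1 - 4 * a^2)" 4] by simp
  moreover have "0 < \<mu>"
    using True by (simp add: \<mu>_def)
  ultimately show ?thesis
    using lyapunov_geometric[OF True] unfolding \<mu>_def by blast
next
  case False
  then show ?thesis
    using lyapunov_constant[OF lam(1)] a by (intro exI[of _ 2]) auto
qed

section \<open>First-passage decompositions\<close>

definition touching_bridges :: "int \<Rightarrow> nat \<Rightarrow> bool list set" where
  "touching_bridges h n = {bs \<in> nonneg_bridges h n. 0 \<in> set (heights h bs)}"

definition single_contact_bridges :: "int \<Rightarrow> nat \<Rightarrow> bool list set" where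
  "single_contact_bridges h n = {bs \<in> nonneg_bridges h n. count_list (heights h bs) 0 = 1}"

definition first_passage :: "int \<Rightarrow> bool list \<Rightarrow> bool" where
  "first_passage h p \<longleftrightarrow> displacement p = - h \<and> (\<forall>v\<in>set (butlast (heights h p)). 0 < v)"

definition last_exit :: "int \<Rightarrow> bool list \<Rightarrow> bool" where
  "last_exit h r \<longleftrightarrow> displacement r = h \<and> (\<forall>v\<in>set (tl (heights 0 r)). 0 < v)"

lemma first_passage_prefix_unique:
  assumes "first_passage h p" "first_passage h p'" "p @ x = p' @ x'"
  shows "p = p'"
proof -
  have "p = p'" if "first_passage h p" "first_passage h p'" "p @ x = p' @ x'" "length p \<le> length p'"
    for p p' x x'
  proof (rule ccontr)
    assume "p \<noteq> p'"
    have prefix: "p = take (length p) p'"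
      using arg_cong[OF that(3), of "take (length p)"] that(4) by simp
    with \<open>p \<noteq> p'\<close> that(4) have less: "length p < length p'"
      by (metis le_neq_implies_less take_all)
    then have "butlast (heights h p') ! length p = h + displacement p"
      by (subst prefix) (simp add: nth_butlast nth_heights)
    moreover have "butlast (heights h p') ! length p \<in> set (butlast (heights h p'))"
      using less by (intro nth_mem) simp
    ultimately show False
      using that(1,2) by (auto simp: first_passage_def)
  qed
  then show ?thesis
    using assms by (metis nat_le_linear)
qed

definition first_hit :: "int \<Rightarrow> bool list \<Rightarrow> nat" where
  "first_hit h s = (LEAST i. i \<le> length s \<and> heights h s ! i \<le> 0)"

lemma first_passage_take_first_hit:
  assumes "0 < h" "\<exists>v\<in>set (heights h s). v \<le> 0"
  shows "first_passage h (take (first_hit h s) s)" "first_hit h s \<le> length s"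
proof -
  define H where "H = heights h s"
  define P where "P i \<longleftrightarrow> i \<le> length s \<and> H ! i \<le> 0" for i
  define i where "i = first_hit h s"
  have "\<exists>j. P j"
    using assms(2) by (auto simp: P_def H_def in_set_conv_nth less_Suc_eq_le)
  moreover have i: "i = (LEAST j. P j)"
    by (simp add: i_def first_hit_def P_def H_def)
  ultimately have Pi: "P i" and least: "\<And>j. P j \<Longrightarrow> i \<le> j"
    by (auto intro: LeastI_ex Least_le)
  have positive: "0 < H ! j" if "j < i" for j
    using least[of j] that Pi by (force simp: P_def)
  obtain k where k: "i = Suc k"
    using Pi assms(1) by (cases i) (auto simp: P_def H_def nth_heights)
  have "\<bar>H ! Suc k - H ! k\<bar> = 1"
    unfolding H_def using Pi k by (intro heights_step) (simp add: P_def)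
  \<comment> \<open>unit steps cannot jump over \<open>0\<close>\<close>
  then have "H ! i = 0"
    using positive[of k] Pi k by (simp add: P_def)
  then have "displacement (take i s) = - h"
    using Pi by (simp add: H_def P_def nth_heights)
  moreover have "butlast (heights h (take i s)) = take i H"
    using Pi by (simp add: heights_take H_def butlast_take P_def)
  moreover have "\<forall>v\<in>set (take i H). 0 < v"
    using positive Pi by (auto simp: in_set_conv_nth P_def)
  ultimately show "first_passage h (take (first_hit h s) s)"
    by (simp add: first_passage_def i_def)
  show "first_hit h s \<le> length s"
    using Pi by (simp add: i_def P_def)
qed

lemma last_exit_iff_first_passage_rev: "last_exit h r \<longleftrightarrow> first_passage h (rev (map Not r))"
proof (cases "displacement r = h")
  case True
  then have "heights h (rev (map Not r)) = rev (heights 0 r)"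
    using heights_rev_map_Not[of 0 r] by simp
  then have "set (butlast (heights h (rev (map Not r)))) = set (tl (heights 0 r))"
    by (simp add: butlast_rev)
  then show ?thesis
    using True by (simp add: last_exit_def first_passage_def)
qed (auto simp: last_exit_def first_passage_def)

lemma last_exit_suffix:
  assumes "0 < h" "displacement q = h" "\<forall>v\<in>set (heights 0 q). 0 \<le> v"
  obtains w r where "q = w @ r" "w \<in> nonneg_bridges 0 (length w)" "last_exit h r"
proof -
  define q' where "q' = rev (map Not q)"
  define i where "i = first_hit h q'"
  have "heights h q' = rev (heights 0 q)"
    using heights_rev_map_Not[of 0 q] assms(2) by (simp add: q'_def)
  then have "0 \<in> set (heights h q')"
    using start_in_heights[of 0 q] by simp
  then have p': "first_passage h (take i q')" and "i \<le> length q'"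
    using first_passage_take_first_hit[OF assms(1)] by (auto simp: i_def)
  define w where "w = rev (map Not (drop i q'))"
  define r where "r = rev (map Not (take i q'))"
  have "q = rev (map Not q')"
    by (simp add: q'_def rev_map comp_def)
  also have "\<dots> = rev (map Not (take i q' @ drop i q'))"
    by simp
  also have "\<dots> = w @ r"
    unfolding w_def r_def by (simp only: map_append rev_append)
  finally have split: "q = w @ r" .
  have "last_exit h r"
    using p' by (simp add: last_exit_iff_first_passage_rev r_def rev_map comp_def)
  moreover have "displacement w = 0"
    using split assms(2) \<open>last_exit h r\<close> by (simp add: last_exit_def)
  moreover have "\<forall>v\<in>set (heights 0 w). 0 \<le> v"
  proof -
    have "heights 0 w = take (Suc (length w)) (heights 0 q)"
      using split by (simp add: heights_take[symmetric])
    then show ?thesis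
      using assms(3) by (metis in_set_takeD)
  qed
  ultimately show ?thesis
    using that split by (simp add: nonneg_bridges_def)
qed

lemma touching_bridge_decomposition:
  assumes "0 < h" "bs \<in> touching_bridges h N"
  obtains p w r where "bs = p @ w @ r" "first_passage h p" "w \<in> nonneg_bridges 0 (length w)" "last_exit h r"
proof -
  define i where "i = first_hit h bs"
  have nonneg: "\<forall>v\<in>set (heights h bs). 0 \<le> v" and "displacement bs = 0"
    using assms(2) by (auto simp: touching_bridges_def nonneg_bridges_def)
  have p: "first_passage h (take i bs)" "i \<le> length bs"
    using first_passage_take_first_hit[OF assms(1)] assms(2) by (auto simp: i_def touching_bridges_def)
  define q where "q = drop i bs"
  have "heights 0 q = drop i (heights h bs)"
    using heights_drop[OF p(2), of h] p(1) by (simp add: q_def first_passage_def)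
  then have "\<forall>v\<in>set (heights 0 q). 0 \<le> v"
    using nonneg by (metis in_set_dropD)
  moreover have "displacement q = h"
    using \<open>displacement bs = 0\<close> p(1) displacement_append[of "take i bs" "drop i bs"]
    by (simp add: q_def first_passage_def)
  ultimately obtain w r where "q = w @ r" "w \<in> nonneg_bridges 0 (length w)" "last_exit h r"
    using last_exit_suffix[OF assms(1)] by blast
  then show ?thesis
    using that p(1) by (metis append_take_drop_id q_def)
qed

lemma touching_bridges_length_ge:
  assumes "0 < h" "bs \<in> touching_bridges h N"
  shows "2 * h \<le> int N"
proof -
  obtain p w r where "bs = p @ w @ r" "first_passage h p" "last_exit h r"
    using touching_bridge_decomposition[OF assms] by metis
  moreover have "length bs = N"
    using assms(2) by (simp add: touching_bridges_def nonneg_bridges_def)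
  moreover have "\<bar>displacement p\<bar> \<le> int (length p)" "\<bar>displacement r\<bar> \<le> int (length r)"
    by (rule abs_displacement_le)+
  ultimately show ?thesis
    by (simp add: first_passage_def last_exit_def)
qed

lemma count_zeros_first_passage_append:
  assumes "first_passage h p" "displacement w = 0" "last_exit h r"
  shows "count_list (heights h (p @ w @ r)) 0 = count_list (heights 0 w) 0"
proof -
  have "heights h (p @ w @ r) = butlast (heights h p) @ butlast (heights 0 w) @ heights 0 r"
    using assms by (simp add: heights_append first_passage_def)
  moreover have "count_list (butlast (heights h p)) 0 = 0"
    using assms(1) by (auto simp: first_passage_def count_list_0_iff)
  moreover have "count_list (heights 0 r) 0 = 1"
    using assms(3) by (subst heights_eq_Cons) (auto simp: last_exit_def count_list_0_iff)
  moreover have "count_list (heights 0 w) 0 = count_list (butlast (heights 0 w)) 0 + 1"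
    using append_butlast_last_id[OF heights_not_Nil, of 0 w, symmetric] assms(2)
    by (metis count_list_append count_list.simps last_heights add.right_neutral add_0)
  ultimately show ?thesis
    by simp
qed

lemma first_passage_append_last_exit:
  assumes "first_passage h p" "last_exit h r"
  shows "p @ r \<in> single_contact_bridges h (length p + length r)"
proof -
  have heights: "heights h (p @ r) = butlast (heights h p) @ 0 # tl (heights 0 r)"
    using assms(1) heights_eq_Cons[of 0 r] by (simp add: heights_append first_passage_def)
  have pos: "\<forall>v\<in>set (butlast (heights h p)) \<union> set (tl (heights 0 r)). 0 < v"
    using assms by (auto simp: first_passage_def last_exit_def)
  then have "\<forall>v\<in>set (heights h (p @ r)). 0 \<le> v"
    unfolding heights by (auto intro: less_imp_le)
  moreover have "0 \<notin> set (butlast (heights h p))" "0 \<notin> set (tl (heights 0 r))"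
    using pos by auto
  then have "count_list (heights h (p @ r)) 0 = 1"
    unfolding heights by simp
  moreover have "displacement (p @ r) = 0"
    using assms by (simp add: first_passage_def last_exit_def)
  ultimately show ?thesis
    by (simp add: single_contact_bridges_def nonneg_bridges_def)
qed

section \<open>The cycle lemma and the lower bound\<close>

definition last_argmax_prefix :: "bool list \<Rightarrow> nat" where
  "last_argmax_prefix q =
     (GREATEST t. t \<le> length q \<and> (\<forall>j\<le>length q. displacement (take j q) \<le> displacement (take t q)))"

lemma last_argmax_prefix:
  fixes q :: "bool list"
  defines "t \<equiv> last_argmax_prefix q"
  shows "t \<le> length q"
    and "\<And>j. j \<le> length q \<Longrightarrow> displacement (take j q) \<le> displacement (take t q)"
    and "\<And>j. t < j \<Longrightarrow> j \<le> length q \<Longrightarrow> displacement (take j q) < displacement (take t q)"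
proof -
  define n where "n = length q"
  define S where "S j = displacement (take j q)" for j
  define M where "M t \<longleftrightarrow> t \<le> n \<and> (\<forall>j\<le>n. S j \<le> S t)" for t
  have "\<exists>t. M t"
  proof -
    have "Max (S ` {..n}) \<in> S ` {..n}"
      by (intro Max_in) auto
    then obtain t0 where "t0 \<le> n" "S t0 = Max (S ` {..n})"
      by (metis atMost_iff imageE)
    then have "M t0"
      by (auto simp: M_def intro: Max_ge)
    then show ?thesis ..
  qed
  moreover have "t = (GREATEST t. M t)"
    unfolding t_def last_argmax_prefix_def M_def S_def n_def ..
  moreover have "\<And>j. M j \<Longrightarrow> j \<le> n"
    by (simp add: M_def)
  ultimately have Mt: "M t" and greatest: "\<And>j. M j \<Longrightarrow> j \<le> t"
    using GreatestI_nat[of M _ n] Greatest_le_nat[of M _ n] by blast+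
  then show "t \<le> length q" "\<And>j. j \<le> length q \<Longrightarrow> displacement (take j q) \<le> displacement (take t q)"
    by (simp_all add: M_def S_def n_def)
  fix j
  assume j: "t < j" "j \<le> length q"
  then have "\<not> M j"
    using greatest[of j] by auto
  then show "displacement (take j q) < displacement (take t q)"
    using Mt j unfolding M_def S_def n_def by force
qed

lemma rotate_last_argmax_prefix:
  assumes "displacement q < 0"
  defines "t \<equiv> last_argmax_prefix q"
  shows "t < length q"
    and "\<And>j. 0 < j \<Longrightarrow> j \<le> length q \<Longrightarrow> displacement (take j (rotate t q)) < 0"
proof -
  note max = last_argmax_prefix[where q = q, folded t_def]
  show "t < length q"
    using max(1) max(2)[of 0] assms(1) by (cases "t = length q") auto
  then have rotate: "rotate t q = drop t q @ take t q"
    by (simp add: rotate_drop_take)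
  have split: "displacement q = displacement (take t q) + displacement (drop t q)"
    using displacement_append[of "take t q" "drop t q"] by simp
  fix j
  assume j: "0 < j" "j \<le> length q"
  show "displacement (take j (rotate t q)) < 0"
  proof (cases "j \<le> length q - t")
    case True
    have "take (t + j) q = take t q @ take j (drop t q)"
      by (simp add: take_add)
    then have "displacement (take j (rotate t q)) = displacement (take (t + j) q) - displacement (take t q)"
      using True by (simp add: rotate)
    then show ?thesis
      using max(3)[of "t + j"] True j \<open>t < length q\<close> by simp
  next
    case False
    have "take j (rotate t q) = drop t q @ take (j - (length q - t)) q"
      using False \<open>t < length q\<close> j by (simp add: rotate min_absorb1)
    moreover have "displacement (take (j - (length q - t)) q) \<le> displacement (take t q)"
      using max(2) j by simp
    ultimately show ?thesis
      using split assms(1) by simp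
  qed
qed

lemma last_exit_rotate_last_argmax_prefix:
  assumes "0 < h" "displacement q = - h"
  shows "last_exit h (map Not (rotate (last_argmax_prefix q) q))"
proof -
  define q' where "q' = map Not (rotate (last_argmax_prefix q) q)"
  have "displacement (rotate (last_argmax_prefix q) q) = displacement q"
    using rotate_last_argmax_prefix(1)[of q] assms
      displacement_append[of "take (last_argmax_prefix q) q" "drop (last_argmax_prefix q) q"]
    by (simp add: rotate_drop_take)
  then have "displacement q' = h"
    using assms by (simp add: q'_def)
  moreover have "0 < v" if v: "v \<in> set (tl (heights 0 q'))" for v
  proof -
    obtain i where "i < length (tl (heights 0 q'))" "v = tl (heights 0 q') ! i"
      using v by (auto simp: in_set_conv_nth)
    then have i: "i < length q'" "v = heights 0 q' ! Suc i"
      by (simp_all add: nth_tl)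
    then have "v = - displacement (take (Suc i) (rotate (last_argmax_prefix q) q))"
      by (simp add: nth_heights q'_def take_map)
    then show ?thesis
      using rotate_last_argmax_prefix(2)[of q "Suc i"] assms i by (simp add: q'_def)
  qed
  ultimately show ?thesis
    by (auto simp: last_exit_def q'_def)
qed

text \<open>The rotation index is recorded to make the encoding injective.\<close>

definition cycle_encode :: "int \<Rightarrow> bool list \<Rightarrow> bool list \<times> nat" where
  "cycle_encode h s =
     (let i = first_hit h s; q = drop i s; t = last_argmax_prefix q
      in (take i s @ map Not (rotate t q), t))"

lemma first_hit_split:
  assumes "0 < h" "s \<in> walks_with_displacement N (-2 * h)"
  shows "first_passage h (take (first_hit h s) s)" "displacement (drop (first_hit h s) s) = - h"
    "first_hit h s \<le> N"
proof -
  have "h + displacement s \<in> set (heights h s)"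
    using last_in_set[OF heights_not_Nil[of h s]] by simp
  moreover have "h + displacement s \<le> 0"
    using assms by (simp add: walks_with_displacement_def)
  ultimately have "\<exists>v\<in>set (heights h s). v \<le> 0"
    by blast
  then have "first_passage h (take (first_hit h s) s)" "first_hit h s \<le> length s"
    using first_passage_take_first_hit[OF assms(1)] by blast+
  moreover have "displacement (take (first_hit h s) s) + displacement (drop (first_hit h s) s) = - 2 * h"
    using assms(2) by (simp add: walks_with_displacement_def flip: displacement_append)
  ultimately show "first_passage h (take (first_hit h s) s)" "displacement (drop (first_hit h s) s) = - h"
    "first_hit h s \<le> N"
    using assms(2) by (auto simp: first_passage_def walks_with_displacement_def)
qed

lemma cycle_encode_mem:
  assumes "0 < h" "s \<in> walks_with_displacement N (-2 * h)"
  shows "cycle_encode h s \<in> single_contact_bridges h N \<times> {..<N}"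
proof -
  define i where "i = first_hit h s"
  define q where "q = drop i s"
  have p: "first_passage h (take i s)" and q: "displacement q = - h" and "i \<le> N"
    using first_hit_split[OF assms] by (simp_all add: i_def q_def)
  have "last_argmax_prefix q < length q"
    using q assms(1) by (intro rotate_last_argmax_prefix(1)) simp
  moreover have "last_exit h (map Not (rotate (last_argmax_prefix q) q))"
    using last_exit_rotate_last_argmax_prefix[OF assms(1) q] .
  moreover have "length (take i s) + length (map Not (rotate (last_argmax_prefix q) q)) = N"
    "length q \<le> N"
    using \<open>i \<le> N\<close> assms(2) by (auto simp: q_def walks_with_displacement_def)
  ultimately have "take i s @ map Not (rotate (last_argmax_prefix q) q) \<in> single_contact_bridges h N"
    "last_argmax_prefix q < N"
    using first_passage_append_last_exit[OF p] by fastforce+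
  then show ?thesis
    by (simp add: cycle_encode_def Let_def i_def q_def)
qed

lemma inj_on_cycle_encode:
  assumes "0 < h"
  shows "inj_on (cycle_encode h) (walks_with_displacement N (-2 * h))"
proof (rule inj_onI)
  fix s s'
  assume s: "s \<in> walks_with_displacement N (-2 * h)" and s': "s' \<in> walks_with_displacement N (-2 * h)"
    and eq: "cycle_encode h s = cycle_encode h s'"
  define i i' where "i = first_hit h s" and "i' = first_hit h s'"
  define q q' where "q = drop i s" and "q' = drop i' s'"
  define t t' where "t = last_argmax_prefix q" and "t' = last_argmax_prefix q'"
  have "(take i s @ map Not (rotate t q), t) = (take i' s' @ map Not (rotate t' q'), t')"
    using eq by (simp only: cycle_encode_def Let_def i_def i'_def q_def q'_def t_def t'_def)
  then have glued: "take i s @ map Not (rotate t q) = take i' s' @ map Not (rotate t' q')" and "t = t'"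
    by auto
  have "first_passage h (take i s)" "first_passage h (take i' s')"
    using first_hit_split(1)[OF assms s] first_hit_split(1)[OF assms s'] by (simp_all add: i_def i'_def)
  then have prefix: "take i s = take i' s'"
    using first_passage_prefix_unique glued by blast
  then have "map Not (rotate t q) = map Not (rotate t q')"
    using glued \<open>t = t'\<close> by simp
  then have "rotate t q = rotate t q'"
    by (simp add: inj_def)
  moreover have "inj (rotate t :: bool list \<Rightarrow> bool list)"
    unfolding rotate_def by (intro inj_fn inj_rotate1)
  ultimately have "q = q'"
    by (simp add: inj_eq)
  then show "s = s'"
    using prefix by (metis append_take_drop_id q_def q'_def)
qed

lemma card_walks_le_single_contact:
  assumes "0 < h"
  shows "card (walks_with_displacement N (-2 * h)) \<le> N * card (single_contact_bridges h N)"
proof -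
  have "finite (single_contact_bridges h N)"
    by (rule finite_subset[OF _ finite_nonneg_bridges[of h N]]) (auto simp: single_contact_bridges_def)
  moreover have "cycle_encode h ` walks_with_displacement N (-2 * h) \<subseteq> single_contact_bridges h N \<times> {..<N}"
    using cycle_encode_mem[OF assms] by blast
  ultimately have "card (walks_with_displacement N (-2 * h)) \<le> card (single_contact_bridges h N \<times> {..<N})"
    using inj_on_cycle_encode[OF assms] by (intro card_inj_on_le) auto
  then show ?thesis
    by (simp add: card_cartesian_product mult.commute)
qed

section \<open>The upper bound\<close>

definition decompositions :: "int \<Rightarrow> nat \<Rightarrow> (bool list \<times> bool list \<times> bool list) set" where
  "decompositions h N = {(p, w, r). first_passage h p \<and> w \<in> nonneg_bridges 0 (length w) \<and> last_exit h r
      \<and> length p + length w + length r = N}"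

lemma finite_decompositions: "finite (decompositions h N)"
proof -
  have "decompositions h N \<subseteq> {w. length w \<le> N} \<times> {w. length w \<le> N} \<times> {w. length w \<le> N}"
    by (auto simp: decompositions_def)
  then show ?thesis
    using finite_lists_length_le[of "UNIV :: bool set" N] by (auto intro: finite_subset)
qed

lemma touching_bridges_subset_decompositions:
  assumes "0 < h"
  shows "touching_bridges h N \<subseteq> (\<lambda>(p, w, r). p @ w @ r) ` decompositions h N"
proof
  fix bs
  assume bs: "bs \<in> touching_bridges h N"
  then obtain p w r where "bs = p @ w @ r" "first_passage h p" "w \<in> nonneg_bridges 0 (length w)" "last_exit h r"
    using touching_bridge_decomposition[OF assms] by metis
  moreover have "length bs = N"
    using bs by (simp add: touching_bridges_def nonneg_bridges_def)
  ultimately show "bs \<in> (\<lambda>(p, w, r). p @ w @ r) ` decompositions h N"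
    by (force simp: decompositions_def)
qed

lemma inj_on_reflect_decompositions:
  "inj_on (\<lambda>(p, w, r). (w, p @ map Not r)) (decompositions h N)"
proof (rule inj_onI)
  fix x x'
  assume "x \<in> decompositions h N" "x' \<in> decompositions h N"
    and eq: "(\<lambda>(p, w, r). (w, p @ map Not r)) x = (\<lambda>(p, w, r). (w, p @ map Not r)) x'"
  moreover obtain p w r p' w' r' where x: "x = (p, w, r)" and x': "x' = (p', w', r')"
    by (cases x, cases x') auto
  ultimately have "first_passage h p" "first_passage h p'" "p @ map Not r = p' @ map Not r'" "w = w'"
    by (auto simp: decompositions_def)
  moreover from this have "p = p'"
    using first_passage_prefix_unique by blast
  ultimately show "x = x'"
    using x x' by (simp add: inj_def)
qed

lemma reflect_decompositions_subset:
  "(\<lambda>(p, w, r). (w, p @ map Not r)) ` decompositions h N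
     \<subseteq> (SIGMA w:{w. length w \<le> N \<and> w \<in> nonneg_bridges 0 (length w)}. walks_with_displacement (N - length w) (-2 * h))"
  by (auto simp: decompositions_def walks_with_displacement_def first_passage_def last_exit_def)

lemma count_zeros_decompositions:
  assumes "(p, w, r) \<in> decompositions h N"
  shows "count_list (heights h (p @ w @ r)) 0 = count_list (heights 0 w) 0"
  using assms count_zeros_first_passage_append by (simp add: decompositions_def nonneg_bridges_def)

lemma touching_weight_le_excursions:
  assumes "0 < h" "0 < lam"
  shows "(\<Sum>bs\<in>touching_bridges h N. lam ^ count_list (heights h bs) 0)
     \<le> (\<Sum>m\<le>N. real (card (walks_with_displacement (N - m) (-2 * h)))
                * (\<Sum>w\<in>nonneg_bridges 0 m. lam ^ count_list (heights 0 w) 0))"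
proof -
  let ?weight = "\<lambda>h bs. lam ^ count_list (heights h bs) 0"
  let ?card = "\<lambda>n. real (card (walks_with_displacement n (-2 * h)))"
  let ?glue = "\<lambda>(p, w, r). p @ w @ r"
  let ?reflect = "\<lambda>(p::bool list, w::bool list, r). (w, p @ map Not r)"
  let ?W = "{w. length w \<le> N \<and> w \<in> nonneg_bridges 0 (length w)}"
  have "finite ?W"
    using finite_lists_length_le[of "UNIV :: bool set" N] by (auto intro: finite_subset)
  have "(\<Sum>bs\<in>touching_bridges h N. ?weight h bs) \<le> (\<Sum>bs\<in>?glue ` decompositions h N. ?weight h bs)"
    using touching_bridges_subset_decompositions[OF assms(1)] finite_decompositions assms(2)
    by (intro sum_mono2) auto
  also have "\<dots> \<le> (\<Sum>d\<in>decompositions h N. ?weight h (?glue d))"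
    using sum_image_le[OF finite_decompositions, where g = "?weight h" and f = ?glue] assms(2) by (simp add: comp_def)
  also have "\<dots> = (\<Sum>d\<in>decompositions h N. ?weight 0 (fst (?reflect d)))"
    by (intro sum.cong refl) (clarsimp simp: count_zeros_decompositions)
  also have "\<dots> = (\<Sum>x\<in>?reflect ` decompositions h N. ?weight 0 (fst x))"
    using sum.reindex[OF inj_on_reflect_decompositions, of "\<lambda>x. ?weight 0 (fst x)"] by (simp add: comp_def)
  also have "\<dots> \<le> (\<Sum>x\<in>(SIGMA w:?W. walks_with_displacement (N - length w) (-2 * h)). ?weight 0 (fst x))"
    using reflect_decompositions_subset \<open>finite ?W\<close> finite_walks_with_displacement assms(2)
    by (intro sum_mono2) auto
  also have "\<dots> = (\<Sum>w\<in>?W. \<Sum>s\<in>walks_with_displacement (N - length w) (-2 * h). ?weight 0 w)"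
    using sum.Sigma[OF \<open>finite ?W\<close>, where B = "\<lambda>w. walks_with_displacement (N - length w) (-2 * h)"
        and g = "\<lambda>w s. ?weight 0 w"] finite_walks_with_displacement
    by (simp add: split_def)
  also have "?W = (\<Union>m\<le>N. nonneg_bridges 0 m)"
    by (auto simp: nonneg_bridges_def)
  also have "(\<Sum>w\<in>(\<Union>m\<le>N. nonneg_bridges 0 m). \<Sum>s\<in>walks_with_displacement (N - length w) (-2 * h). ?weight 0 w)
      = (\<Sum>w\<in>(\<Union>m\<le>N. nonneg_bridges 0 m). ?card (N - length w) * ?weight 0 w)"
    by simp
  also have "\<dots> = (\<Sum>m\<le>N. \<Sum>w\<in>nonneg_bridges 0 m. ?card (N - length w) * ?weight 0 w)"
    by (rule sum.UNION_disjoint) (simp_all add: finite_nonneg_bridges, auto simp: nonneg_bridges_def)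
  also have "\<dots> = (\<Sum>m\<le>N. ?card (N - m) * (\<Sum>w\<in>nonneg_bridges 0 m. ?weight 0 w))"
    by (intro sum.cong refl) (auto simp: nonneg_bridges_def sum_distrib_left)
  finally show ?thesis .
qed

lemma touching_weight_le:
  assumes "0 < h" "lyapunov lam \<mu> g" "0 < lam" "0 < \<mu>" "4 \<le> \<mu>^2"
    and "\<mu>^2 * (real N^2 - 4 * real (nat h)^2) \<le> 4 * real N^2" "even N"
  shows "(\<Sum>bs\<in>touching_bridges h N. lam ^ count_list (heights h bs) 0)
     \<le> lam * real (N + 1)^2 * real (N choose (N div 2 - nat h))"
proof -
  define B where "B = real (N + 1) * real (N choose (N div 2 - nat h))"
  have walks_le: "real (card (walks_with_displacement (N - m) (-2 * h))) * \<mu> ^ m \<le> B" if "m \<le> N" for m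
  proof (cases "walks_with_displacement (N - m) (-2 * h) = {}")
    case False
    then have parity: "even (N - m)" "2 * nat h \<le> N - m"
      using walks_with_displacement_nonempty assms(1) by fastforce+
    then have "card (walks_with_displacement (N - m) (-2 * h)) = (N - m) choose ((N - m) div 2 - nat h)"
      using assms(1) by (intro card_walks_with_displacement) auto
    then show ?thesis
      using binomial_times_power_le[OF assms(4,5,6) parity _ assms(7)] that by (simp add: B_def)
  qed (simp add: B_def)
  then have "real (card (walks_with_displacement (N - m) (-2 * h)))
      * (\<Sum>w\<in>nonneg_bridges 0 m. lam ^ count_list (heights 0 w) 0) \<le> lam * B" if "m \<le> N" for m
  proof -
    have "real (card (walks_with_displacement (N - m) (-2 * h)))
        * (\<Sum>w\<in>nonneg_bridges 0 m. lam ^ count_list (heights 0 w) 0)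
        \<le> real (card (walks_with_displacement (N - m) (-2 * h))) * (lam * \<mu> ^ m)"
      by (intro mult_left_mono excursion_weight_le[OF assms(2,3)]) simp
    also have "\<dots> \<le> lam * B"
      using walks_le[OF that] assms(3) by (simp add: mult.left_commute)
    finally show ?thesis .
  qed
  then have "(\<Sum>m\<le>N. real (card (walks_with_displacement (N - m) (-2 * h)))
                * (\<Sum>w\<in>nonneg_bridges 0 m. lam ^ count_list (heights 0 w) 0)) \<le> (\<Sum>m\<le>N. lam * B)"
    by (intro sum_mono) simp
  also have "\<dots> = lam * real (N + 1)^2 * real (N choose (N div 2 - nat h))"
    by (simp add: B_def power2_eq_square algebra_simps)
  finally show ?thesis
    using touching_weight_le_excursions[OF assms(1,3), of N] by linarith
qed

section \<open>Paths as step sequences\<close>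

lemma even_ceil_eq: "even_ceil s = 2 * \<lceil>s / 2\<rceil>"
  unfolding even_ceil_def
proof (rule Least_equality)
  show "even (2 * \<lceil>s / 2\<rceil>) \<and> s \<le> real_of_int (2 * \<lceil>s / 2\<rceil>)"
    by simp linarith
next
  fix k :: int
  assume k: "even k \<and> s \<le> real_of_int k"
  then obtain j where j: "k = 2 * j"
    by (auto elim: evenE)
  then have "\<lceil>s / 2\<rceil> \<le> j"
    using k by (simp add: ceiling_le_iff)
  then show "2 * \<lceil>s / 2\<rceil> \<le> k"
    using j by simp
qed

lemma even_ceil_ge: "s \<le> real_of_int (even_ceil s)"
  unfolding even_ceil_eq by simp linarith

definition steps :: "nat \<Rightarrow> int list \<Rightarrow> bool list" where
  "steps N \<eta> = map (\<lambda>i. \<eta> ! i < \<eta> ! Suc i) [0..<N]"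

lemma heights_steps:
  assumes "length \<eta> = N + 1" "\<forall>x<N. \<bar>\<eta> ! (x + 1) - \<eta> ! x\<bar> = 1"
  shows "heights (\<eta> ! 0) (steps N \<eta>) = \<eta>"
proof (rule nth_equalityI)
  show "length (heights (\<eta> ! 0) (steps N \<eta>)) = length \<eta>"
    using assms(1) by (simp add: steps_def)
  have nth_eq: "\<eta> ! j = \<eta> ! 0 + displacement (take j (steps N \<eta>))" if "j \<le> N" for j
    using that
  proof (induction j)
    case (Suc j)
    have "\<bar>\<eta> ! Suc j - \<eta> ! j\<bar> = 1"
      using assms(2) Suc.prems by simp
    moreover have "displacement (take (Suc j) (steps N \<eta>))
        = displacement (take j (steps N \<eta>)) + (if \<eta> ! j < \<eta> ! Suc j then 1 else -1)"
      using Suc.prems by (simp add: displacement_take_Suc steps_def)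
    moreover have "\<eta> ! j = \<eta> ! 0 + displacement (take j (steps N \<eta>))"
      using Suc by simp
    ultimately show ?case
      by (auto simp: abs_if split: if_splits)
  qed simp
  show "heights (\<eta> ! 0) (steps N \<eta>) ! j = \<eta> ! j" if "j < length (heights (\<eta> ! 0) (steps N \<eta>))" for j
    using that nth_eq[of j] by (simp add: nth_heights steps_def)
qed

lemma paths_eq_heights_image:
  "paths a N = heights (even_ceil (a * real N)) ` nonneg_bridges (even_ceil (a * real N)) N"
  (is "_ = heights ?h ` _")
proof
  show "paths a N \<subseteq> heights ?h ` nonneg_bridges ?h N"
  proof
    fix \<eta>
    assume "\<eta> \<in> paths a N"
    then have \<eta>: "length \<eta> = N + 1" "\<forall>x<N. \<bar>\<eta> ! (x + 1) - \<eta> ! x\<bar> = 1" "\<eta> ! 0 = ?h" "\<eta> ! N = ?h"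
      "\<forall>x\<le>N. 0 \<le> \<eta> ! x"
      by (auto simp: paths_def)
    then have heights: "heights ?h (steps N \<eta>) = \<eta>"
      using heights_steps by metis
    have "\<eta> ! N = ?h + displacement (steps N \<eta>)"
      using nth_heights[of N "steps N \<eta>" ?h] heights by (simp add: steps_def)
    moreover have "\<forall>v\<in>set \<eta>. 0 \<le> v"
      using \<eta> by (auto simp: in_set_conv_nth)
    ultimately have "steps N \<eta> \<in> nonneg_bridges ?h N"
      using heights \<eta>(4) by (simp add: nonneg_bridges_def steps_def)
    then show "\<eta> \<in> heights ?h ` nonneg_bridges ?h N"
      using heights by force
  qed
  show "heights ?h ` nonneg_bridges ?h N \<subseteq> paths a N"
  proof clarify
    fix bs
    assume "bs \<in> nonneg_bridges ?h N"
    then have bs: "length bs = N" "displacement bs = 0" "\<forall>v\<in>set (heights ?h bs). 0 \<le> v"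
      by (auto simp: nonneg_bridges_def)
    have "0 \<le> heights ?h bs ! x" if "x \<le> N" for x
      using bs that by (simp add: less_Suc_eq_le)
    moreover have "heights ?h bs ! 0 = ?h" "heights ?h bs ! N = ?h"
      using bs by (simp_all add: nth_heights)
    moreover have "\<bar>heights ?h bs ! (x + 1) - heights ?h bs ! x\<bar> = 1" if "x < N" for x
      using heights_step[of x bs ?h] bs that by simp
    ultimately show "heights ?h bs \<in> paths a N"
      using bs by (simp add: paths_def)
  qed
qed

lemma contacts_heights:
  assumes "length bs = N"
  shows "contacts N (heights h bs) = count_list (heights h bs) 0"
proof -
  have "{x. x \<le> N \<and> heights h bs ! x = 0} = {i. i < length (heights h bs) \<and> 0 = heights h bs ! i}"
    using assms by auto
  then show ?thesis
    by (simp add: contacts_def count_list_eq_length_filter length_filter_conv_card)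
qed

lemma sum_contacts_heights_image:
  assumes "A \<subseteq> nonneg_bridges h N"
  shows "(\<Sum>\<eta>\<in>heights h ` A. lam ^ contacts N \<eta>) = (\<Sum>bs\<in>A. lam ^ count_list (heights h bs) 0)"
proof -
  have "inj_on (heights h) A"
  proof (rule inj_onI)
    fix bs bs'
    assume "bs \<in> A" "bs' \<in> A" "heights h bs = heights h bs'"
    then show "bs = bs'"
      using assms by (intro heights_inj[of bs bs' h]) (auto simp: nonneg_bridges_def)
  qed
  moreover have "length bs = N" if "bs \<in> A" for bs
    using assms that by (auto simp: nonneg_bridges_def)
  ultimately show ?thesis
    by (simp add: sum.reindex contacts_heights)
qed

lemma check_paths_eq_heights_image:
  "check_paths a N = heights (even_ceil (a * real N)) ` touching_bridges (even_ceil (a * real N)) N"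
proof -
  have "(\<exists>x\<le>N. heights h bs ! x = 0) \<longleftrightarrow> 0 \<in> set (heights h bs)" if "length bs = N" for h bs
    using that by (auto simp: in_set_conv_nth less_Suc_eq_le)
  then show ?thesis
    unfolding check_paths_def paths_eq_heights_image
    by (auto simp: touching_bridges_def nonneg_bridges_def)
qed

lemma bd_check_paths_eq_heights_image:
  "bd_check_paths a N = heights (even_ceil (a * real N)) ` single_contact_bridges (even_ceil (a * real N)) N"
  unfolding bd_check_paths_def paths_eq_heights_image
  by (auto simp: single_contact_bridges_def nonneg_bridges_def contacts_heights)

lemma pin_ratio:
  assumes "0 < lam" "paths a N \<noteq> {}"
  shows "pin lam a N A / pin lam a N B
       = (\<Sum>\<eta>\<in>A \<inter> paths a N. lam ^ contacts N \<eta>) / (\<Sum>\<eta>\<in>B \<inter> paths a N. lam ^ contacts N \<eta>)"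
proof -
  have "finite (paths a N)"
    unfolding paths_eq_heights_image by (intro finite_imageI finite_nonneg_bridges)
  then have "0 < (\<Sum>\<eta>\<in>paths a N. lam ^ contacts N \<eta>)"
    using assms by (intro sum_pos) auto
  then show ?thesis
    by (simp add: pin_def)
qed

lemma ratio_lower_bound:
  fixes lam B C S n :: real
  assumes "0 < lam" "0 < C" "0 < S" "1 \<le> n" "S \<le> lam * (n + 1)^2 * C" "C \<le> n * B"
  shows "1 / 4 / n ^ 3 \<le> lam * B / S"
proof -
  have "0 < n * B"
    using assms by linarith
  then have "0 < B"
    using assms(4) by (simp add: zero_less_mult_iff)
  have "1 / 4 / n ^ 3 \<le> 1 / (n * (n + 1)^2)"
  proof -
    have "(n + 1)^2 \<le> (2 * n)^2"
      using assms(4) by (intro power_mono) auto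
    then have "n * (n + 1)^2 \<le> n * (2 * n)^2"
      using assms(4) by (intro mult_left_mono) auto
    also have "\<dots> = 4 * n ^ 3"
      by (simp add: power2_eq_square power3_eq_cube)
    finally show ?thesis
      using assms(4) by (simp add: field_simps)
  qed
  also have "\<dots> = lam * (C / n) / (lam * (n + 1)^2 * C)"
    using assms by (simp add: field_simps)
  also have "\<dots> \<le> lam * B / S"
    using assms \<open>0 < B\<close> by (intro frac_le mult_left_mono) (auto simp: field_simps)
  finally show ?thesis .
qed

lemma pin_contact_ratio_eq:
  assumes "0 < lam" "check_paths a N \<noteq> {}"
  defines "h \<equiv> even_ceil (a * real N)"
  shows "pin lam a N (bd_check_paths a N) / pin lam a N (check_paths a N)
      = lam * real (card (single_contact_bridges h N))
        / (\<Sum>bs\<in>touching_bridges h N. lam ^ count_list (heights h bs) 0)"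
proof -
  have sub: "check_paths a N \<subseteq> paths a N" "bd_check_paths a N \<subseteq> paths a N"
    by (auto simp: check_paths_def bd_check_paths_def)
  then have "paths a N \<noteq> {}"
    using assms(2) by blast
  then have "pin lam a N (bd_check_paths a N) / pin lam a N (check_paths a N)
      = (\<Sum>\<eta>\<in>bd_check_paths a N. lam ^ contacts N \<eta>) / (\<Sum>\<eta>\<in>check_paths a N. lam ^ contacts N \<eta>)"
    using pin_ratio[OF assms(1)] sub by (simp add: Int_absorb2)
  also have "\<dots> = (\<Sum>bs\<in>single_contact_bridges h N. lam ^ count_list (heights h bs) 0)
        / (\<Sum>bs\<in>touching_bridges h N. lam ^ count_list (heights h bs) 0)"
    unfolding check_paths_eq_heights_image bd_check_paths_eq_heights_image h_def
    by (intro arg_cong2[where f = "(/)"] sum_contacts_heights_image)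
      (auto simp: touching_bridges_def single_contact_bridges_def)
  also have "(\<Sum>bs\<in>single_contact_bridges h N. lam ^ count_list (heights h bs) 0)
      = lam * real (card (single_contact_bridges h N))"
    by (simp add: single_contact_bridges_def)
  finally show ?thesis .
qed

lemma growth_condition_of_drift:
  fixes \<mu> a :: real and h N :: nat
  assumes "0 \<le> a * real N" "a * real N \<le> real h" "\<mu>^2 * (1 - 4 * a^2) \<le> 4"
  shows "\<mu>^2 * (real N^2 - 4 * real h^2) \<le> 4 * real N^2"
proof -
  have "(a * real N)^2 \<le> real h^2"
    using assms by (intro power_mono) auto
  then have "\<mu>^2 * (real N^2 - 4 * real h^2) \<le> (\<mu>^2 * (1 - 4 * a^2)) * real N^2"
    by (simp add: algebra_simps power_mult_distrib mult_left_mono)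
  also have "\<dots> \<le> 4 * real N^2"
    using assms(3) by (intro mult_right_mono) auto
  finally show ?thesis .
qed

lemma contact_ratio_ge:
  assumes "0 < a" "0 < lam" "lyapunov lam \<mu> g" "0 < \<mu>" "4 \<le> \<mu>^2" "\<mu>^2 * (1 - 4 * a^2) \<le> 4"
    and "0 < N" "even N" "check_paths a N \<noteq> {}"
  shows "1 / 4 / real N ^ 3 \<le> pin lam a N (bd_check_paths a N) / pin lam a N (check_paths a N)"
proof -
  define h where "h = even_ceil (a * real N)"
  define S where "S = (\<Sum>bs\<in>touching_bridges h N. lam ^ count_list (heights h bs) 0)"
  define C where "C = real (N choose (N div 2 - nat h))"
  have "a * real N \<le> real_of_int h" "0 < a * real N"
    using even_ceil_ge assms(1,7) by (simp_all add: h_def)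
  then have "0 < h" "a * real N \<le> real (nat h)"
    by simp_all
  obtain bs where bs: "bs \<in> touching_bridges h N"
    using assms(9) by (auto simp: check_paths_eq_heights_image h_def)
  have "S \<le> lam * real (N + 1)^2 * C"
    unfolding S_def C_def using growth_condition_of_drift[OF _ \<open>a * real N \<le> real (nat h)\<close> assms(6)]
    by (intro touching_weight_le[OF \<open>0 < h\<close> assms(3,2,4,5) _ assms(8)]) (use \<open>0 < a * real N\<close> in simp)
  then have upper: "S \<le> lam * (real N + 1)^2 * C"
    by (simp add: add.commute)
  have "2 * h \<le> int N"
    using touching_bridges_length_ge[OF \<open>0 < h\<close> bs] .
  then have lower: "C \<le> real N * real (card (single_contact_bridges h N))"
    using card_walks_le_single_contact[OF \<open>0 < h\<close>, of N] card_walks_with_displacement[of h N]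
      \<open>0 < h\<close> assms(8) by (simp add: C_def flip: of_nat_mult)
  have "finite (touching_bridges h N)"
    by (rule finite_subset[OF _ finite_nonneg_bridges]) (auto simp: touching_bridges_def)
  then have "0 < S"
    unfolding S_def using bs assms(2) by (intro sum_pos2[OF _ bs]) auto
  moreover have "0 < C" "1 \<le> real N"
    using assms(7) by (simp_all add: C_def)
  ultimately show ?thesis
    unfolding pin_contact_ratio_eq[OF assms(2,9)] using ratio_lower_bound[OF assms(2)] upper lower
    by (simp add: S_def h_def)
qed

theorem lemma4p5:
  fixes a lam :: real
  assumes "0 < a" "a < 1/2" "0 < lam" "lam \<le> 2 / (1 - 2 * a)"
  shows "\<exists>C>0. \<forall>N::nat. even N \<and> check_paths a N \<noteq> {} \<longrightarrow>
           pin lam a N (bd_check_paths a N) / pin lam a N (check_paths a N) \<ge> C / real N ^ 3"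
proof -
  obtain \<mu> g where g: "lyapunov lam \<mu> g" and \<mu>: "0 < \<mu>" "4 \<le> \<mu>^2" "\<mu>^2 * (1 - 4 * a^2) \<le> 4"
    using lyapunov_exists[OF assms] by blast
  have "1 / 4 / real N ^ 3 \<le> pin lam a N (bd_check_paths a N) / pin lam a N (check_paths a N)"
    if "even N" "check_paths a N \<noteq> {}" for N
  proof (cases "N = 0")
    case True
    \<comment> \<open>the bound \<open>1 / 4 / 0\<close> is \<open>0\<close>\<close>
    have "0 \<le> pin lam a N A" for A
      unfolding pin_def using assms(3) by (intro divide_nonneg_nonneg sum_nonneg) auto
    then show ?thesis
      using True by (simp add: divide_nonneg_nonneg)
  next
    case False
    then show ?thesis
      using contact_ratio_ge[OF assms(1,3) g \<mu>] that by simp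
  qed
  then show ?thesis
    by (intro exI[of _ "1 / 4"]) auto
qed

end
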